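(* Each member of $\mathcal{G}_0$ is cycle-extendable.
   Context: A half biwheel is obtained from a path $P$ of even length (possibly a single vertex) with color classes $A,B$, whose ends lie in $A$, by adding a new vertex (the hub) adjacent to every vertex of $A$; the ends of $P$ are the corners (if $P$ is a single vertex the result is $K_2$, either vertex being the hub and the other the unique corner). $\mathcal{G}_0$ (generalized prisms) consists of the graphs obtained as follows: take an odd $k\ge3$ and disjoint half biwheels $H_0,\dots,H_{k-1}$; for each $i$ label either $w_i=x_i$ := the hub and $y_i,z_i$ := the corners (in some order), or $y_i=z_i$ := the hub and $w_i,x_i$ := the corners (in some order); then add the edges $x_iw_{i+1}$ and $y_iz_{i+1}$ for all $0\le i\le k-1$, indices modulo $k$. A matching covered graph (connected, at least two vertices, every edge in a perfect matching) is cycle-extendable if for every even cycle $C$ the graph $G-V(C)$ has a perfect matching. *)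

theory Defs
  imports Main
begin

definition simple_graph :: "'a set \<Rightarrow> 'a set set \<Rightarrow> bool" where
  "simple_graph V E \<longleftrightarrow> finite V \<and>
     (\<forall>e\<in>E. \<exists>u v. e = {u, v} \<and> u \<noteq> v \<and> u \<in> V \<and> v \<in> V)"

definition perfect_matching :: "'a set \<Rightarrow> 'a set set \<Rightarrow> 'a set set \<Rightarrow> bool" where
  "perfect_matching V E M \<longleftrightarrow> M \<subseteq> E \<and> (\<forall>v\<in>V. \<exists>!e. e \<in> M \<and> v \<in> e)"

definition graph_connected :: "'a set \<Rightarrow> 'a set set \<Rightarrow> bool" where
  "graph_connected V E \<longleftrightarrow> (\<forall>u\<in>V. \<forall>v\<in>V. (\<lambda>a b. {a, b} \<in> E)\<^sup>*\<^sup>* u v)"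

definition matching_covered :: "'a set \<Rightarrow> 'a set set \<Rightarrow> bool" where
  "matching_covered V E \<longleftrightarrow> simple_graph V E \<and> graph_connected V E \<and> card V \<ge> 2 \<and>
     (\<forall>e\<in>E. \<exists>M. perfect_matching V E M \<and> e \<in> M)"

definition is_cycle :: "'a set set \<Rightarrow> 'a list \<Rightarrow> bool" where
  "is_cycle E cs \<longleftrightarrow> distinct cs \<and> length cs \<ge> 3 \<and>
     (\<forall>i < length cs. {cs ! i, cs ! ((i + 1) mod length cs)} \<in> E)"

definition del_vertices_edges :: "'a set set \<Rightarrow> 'a set \<Rightarrow> 'a set set" where
  "del_vertices_edges E S = {e \<in> E. e \<inter> S = {}}"

definition cycle_extendable :: "'a set \<Rightarrow> 'a set set \<Rightarrow> bool" where
  "cycle_extendable V E \<longleftrightarrow> matching_covered V E \<and>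
     (\<forall>cs. is_cycle E cs \<and> even (length cs) \<longrightarrow>
        (\<exists>M. perfect_matching (V - set cs) (del_vertices_edges E (set cs)) M))"

text \<open>Half biwheel number i built on the path (i,0),(i,1),...,(i,2m) (even length 2m,
  colour class A = even positions, ends (i,0),(i,2m) are the corners) with hub (i,2m+1).
  For m = 0 this is K2 with unique corner (i,0).\<close>

definition hbw_verts :: "nat \<Rightarrow> nat \<Rightarrow> (nat \<times> nat) set" where
  "hbw_verts i m = {(i, p) | p. p \<le> 2 * m + 1}"

definition hbw_edges :: "nat \<Rightarrow> nat \<Rightarrow> (nat \<times> nat) set set" where
  "hbw_edges i m = {{(i, p), (i, Suc p)} | p. p < 2 * m}
                 \<union> {{(i, 2 * m + 1), (i, 2 * q)} | q. q \<le> m}"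

definition hbw_hub :: "nat \<Rightarrow> nat \<Rightarrow> nat \<times> nat" where
  "hbw_hub i m = (i, 2 * m + 1)"

definition hbw_corner0 :: "nat \<Rightarrow> nat \<times> nat" where
  "hbw_corner0 i = (i, 0)"

definition hbw_corner1 :: "nat \<Rightarrow> nat \<Rightarrow> nat \<times> nat" where
  "hbw_corner1 i m = (i, 2 * m)"

definition first_corner :: "(nat \<Rightarrow> nat) \<Rightarrow> (nat \<Rightarrow> bool) \<Rightarrow> nat \<Rightarrow> nat \<times> nat" where
  "first_corner m ori i = (if ori i then hbw_corner0 i else hbw_corner1 i (m i))"

definition second_corner :: "(nat \<Rightarrow> nat) \<Rightarrow> (nat \<Rightarrow> bool) \<Rightarrow> nat \<Rightarrow> nat \<times> nat" where
  "second_corner m ori i = (if ori i then hbw_corner1 i (m i) else hbw_corner0 i)"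

definition lab_w :: "(nat \<Rightarrow> nat) \<Rightarrow> (nat \<Rightarrow> bool) \<Rightarrow> (nat \<Rightarrow> bool) \<Rightarrow> nat \<Rightarrow> nat \<times> nat" where
  "lab_w m h ori i = (if h i then hbw_hub i (m i) else first_corner m ori i)"

definition lab_x :: "(nat \<Rightarrow> nat) \<Rightarrow> (nat \<Rightarrow> bool) \<Rightarrow> (nat \<Rightarrow> bool) \<Rightarrow> nat \<Rightarrow> nat \<times> nat" where
  "lab_x m h ori i = (if h i then hbw_hub i (m i) else second_corner m ori i)"

definition lab_y :: "(nat \<Rightarrow> nat) \<Rightarrow> (nat \<Rightarrow> bool) \<Rightarrow> (nat \<Rightarrow> bool) \<Rightarrow> nat \<Rightarrow> nat \<times> nat" where
  "lab_y m h ori i = (if h i then first_corner m ori i else hbw_hub i (m i))"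

definition lab_z :: "(nat \<Rightarrow> nat) \<Rightarrow> (nat \<Rightarrow> bool) \<Rightarrow> (nat \<Rightarrow> bool) \<Rightarrow> nat \<Rightarrow> nat \<times> nat" where
  "lab_z m h ori i = (if h i then second_corner m ori i else hbw_hub i (m i))"

definition prism_verts :: "nat \<Rightarrow> (nat \<Rightarrow> nat) \<Rightarrow> (nat \<times> nat) set" where
  "prism_verts k m = (\<Union>i<k. hbw_verts i (m i))"

definition prism_edges ::
  "nat \<Rightarrow> (nat \<Rightarrow> nat) \<Rightarrow> (nat \<Rightarrow> bool) \<Rightarrow> (nat \<Rightarrow> bool) \<Rightarrow> (nat \<times> nat) set set" where
  "prism_edges k m h ori =
     (\<Union>i<k. hbw_edges i (m i))
     \<union> {{lab_x m h ori i, lab_w m h ori ((i + 1) mod k)} | i. i < k}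
     \<union> {{lab_y m h ori i, lab_z m h ori ((i + 1) mod k)} | i. i < k}"

definition in_G0 :: "'a set \<Rightarrow> 'a set set \<Rightarrow> bool" where
  "in_G0 V E \<longleftrightarrow> (\<exists>k m h ori f. odd k \<and> k \<ge> 3 \<and>
       bij_betw f (prism_verts k m) V \<and> E = (\<lambda>e. f ` e) ` prism_edges k m h ori)"

end

theory Submission
  imports Defs
begin

(*
  Let C be an even cycle of a generalized prism.  First, the two junction edges x_c w_{c+1}
  and y_c z_{c+1} are both on C or both off C.  Indeed, C crosses the cut around a single
  half biwheel an even number of times, so all k junctions carry C-edges of the same
  parity.  On the other hand, writing a vertex as (i, p) with p its position on the path
  (the hub has position 2 m_i + 1), the only edges joining two positions of equal parity
  are the junction edges between half biwheels labelled alike, and as k is odd there is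
  an odd number of such junctions.  These C-edges are even in number, because the other
  C-edges form a cut of C and |C| is even; hence the common parity is even.
  With balanced junctions, C meets each half biwheel either not at all, or in its hub
  together with a segment of its path whose two ends lie in A.  The remaining vertices
  of every half biwheel are matched by path edges, and these matchings together form a
  perfect matching of G - V(C).
*)

section \<open>Cyclic sequences\<close>

lemma Suc_mod_less [simp]: "i < n \<Longrightarrow> Suc i mod n < n"
  by simp

lemma Suc_mod_eq_iff:
  assumes "l < n" "i < n"
  shows "Suc l mod n = i \<longleftrightarrow> l = (if i = 0 then n - 1 else i - 1)"
  using assms by (cases "Suc l = n") auto

lemma Suc_mod_neq:
  assumes "l < n" "n \<ge> 2"
  shows "Suc l mod n \<noteq> l"
  using assms by (cases "Suc l = n") auto

lemma inj_on_Suc_mod: "inj_on (\<lambda>i. Suc i mod n) {..<n}"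
  by (rule inj_onI) (auto simp: mod_Suc split: if_splits)

lemma Suc_mod_image: "(\<lambda>i. Suc i mod n) ` {..<n} = {..<n}"
  by (intro endo_inj_surj inj_on_Suc_mod) auto

lemma sum_Suc_mod: "(\<Sum>i<n. g (Suc i mod n)) = (\<Sum>i<n. g i)"
  using sum.reindex[OF inj_on_Suc_mod, of g n] Suc_mod_image by simp

lemma card_filter_split: "finite A \<Longrightarrow> card A = card {x \<in> A. P x} + card {x \<in> A. \<not> P x}"
  by (subst card_Un_disjoint[symmetric]) (auto intro: arg_cong[where f = card])

lemma even_card_cyclic_changes:
  fixes P :: "nat \<Rightarrow> bool"
  shows "even (card {i. i < n \<and> P i \<noteq> P (Suc i mod n)})"
proof -
  let ?b = "\<lambda>i. of_bool (P i) :: nat"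
  let ?both = "\<Sum>i<n. of_bool (P i \<and> P (Suc i mod n)) :: nat"
  let ?changes = "card {i. i < n \<and> P i \<noteq> P (Suc i mod n)}"
  have "2 * (\<Sum>i<n. ?b i) = (\<Sum>i<n. ?b i + ?b (Suc i mod n))"
    by (simp only: sum.distrib sum_Suc_mod[of ?b] mult_2)
  also have "\<dots> = (\<Sum>i<n. 2 * of_bool (P i \<and> P (Suc i mod n)) + of_bool (P i \<noteq> P (Suc i mod n)))"
    by (intro sum.cong refl) auto
  also have "\<dots> = 2 * ?both + ?changes"
    by (simp add: sum.distrib sum_distrib_left[symmetric] lessThan_def Collect_conj_eq)
  finally have "even (2 * ?both + ?changes)"
    by (metis dvd_triv_left)
  then show ?thesis
    by simp
qed

lemma odd_card_cyclic_agreements: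
  fixes P :: "nat \<Rightarrow> bool"
  assumes "odd n"
  shows "odd (card {i. i < n \<and> P i = P (Suc i mod n)})"
proof -
  have "n = card {i. i < n \<and> P i = P (Suc i mod n)} + card {i. i < n \<and> P i \<noteq> P (Suc i mod n)}"
    using card_filter_split[of "{..<n}" "\<lambda>i. P i = P (Suc i mod n)"] by (simp add: lessThan_def)
  then show ?thesis
    using even_card_cyclic_changes[of n P] assms by presburger
qed

lemma cyclic_change_exists:
  fixes P :: "nat \<Rightarrow> bool"
  assumes "i < n" "i' < n" "P i" "\<not> P i'"
  shows "\<exists>l<n. P l \<noteq> P (Suc l mod n)"
proof (rule ccontr)
  assume "\<not> ?thesis"
  then have step: "P l = P (Suc l mod n)" if "l < n" for l
    using that by blast
  have "P ((i + d) mod n)" for d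
  proof (induction d)
    case (Suc d)
    then show ?case
      using step[of "(i + d) mod n"] \<open>i < n\<close> by (simp add: mod_Suc_eq)
  qed (use assms in simp)
  from this[of "n - i + i'"] assms show False by simp
qed

section \<open>Cycles and cuts\<close>

definition cycle_edge :: "'a list \<Rightarrow> nat \<Rightarrow> 'a set" where
  "cycle_edge cs i = {cs ! i, cs ! (Suc i mod length cs)}"

definition cycle_edges :: "'a list \<Rightarrow> 'a set set" where
  "cycle_edges cs = cycle_edge cs ` {..<length cs}"

definition cut_edges :: "'a set set \<Rightarrow> 'a set \<Rightarrow> 'a set set" where
  "cut_edges F X = {e \<in> F. card (e \<inter> X) = 1}"

lemma card_doubleton_Int_eq_1:
  "u \<noteq> v \<Longrightarrow> card ({u, v} \<inter> X) = 1 \<longleftrightarrow> (u \<in> X) \<noteq> (v \<in> X)"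
  by (cases "u \<in> X"; cases "v \<in> X") auto

lemma cycle_edge_subset: "e \<in> cycle_edges cs \<Longrightarrow> e \<subseteq> set cs"
  unfolding cycle_edges_def cycle_edge_def by auto

lemma cycle_edges_subset: "is_cycle E cs \<Longrightarrow> cycle_edges cs \<subseteq> E"
  unfolding cycle_edges_def cycle_edge_def is_cycle_def by auto

lemma is_cycle_set_subset:
  assumes "is_cycle E cs" "\<forall>e\<in>E. e \<subseteq> V"
  shows "set cs \<subseteq> V"
proof
  fix v assume "v \<in> set cs"
  then obtain i where "i < length cs" "v = cs ! i"
    by (auto simp: in_set_conv_nth)
  then show "v \<in> V"
    using assms unfolding is_cycle_def by blast
qed

context
  fixes cs :: "'a list"
  assumes distinct: "distinct cs" and length: "length cs \<ge> 3"
begin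

lemma cycle_edge_neq: "i < length cs \<Longrightarrow> cs ! i \<noteq> cs ! (Suc i mod length cs)"
  using Suc_mod_neq[of i "length cs"] length by (simp add: nth_eq_iff_index_eq[OF distinct])

lemma inj_on_cycle_edge: "inj_on (cycle_edge cs) {..<length cs}"
proof (rule inj_onI)
  fix i j assume i: "i \<in> {..<length cs}" and j: "j \<in> {..<length cs}"
    and eq: "cycle_edge cs i = cycle_edge cs j"
  show "i = j"
  proof (rule ccontr)
    assume "i \<noteq> j"
    with eq i j have "Suc j mod length cs = i" "Suc i mod length cs = j"
      using length by (auto simp: cycle_edge_def doubleton_eq_iff nth_eq_iff_index_eq[OF distinct])
    with i j length show False
      by (auto simp: Suc_mod_eq_iff split: if_splits)
  qed
qed

lemma card_cycle_edges: "card (cycle_edges cs) = length cs"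
  unfolding cycle_edges_def using inj_on_cycle_edge by (simp add: card_image)

lemma card_cycle_edge: "e \<in> cycle_edges cs \<Longrightarrow> card e = 2"
  unfolding cycle_edges_def cycle_edge_def using cycle_edge_neq by auto

lemma cycle_degree:
  assumes "v \<in> set cs"
  shows "card {e \<in> cycle_edges cs. v \<in> e} = 2"
proof -
  obtain i where i: "i < length cs" "v = cs ! i"
    using assms by (auto simp: in_set_conv_nth)
  define p where "p = (if i = 0 then length cs - 1 else i - 1)"
  have p: "p < length cs" "p \<noteq> i"
    using i length by (auto simp: p_def)
  have incident: "v \<in> cycle_edge cs l \<longleftrightarrow> l = i \<or> l = p" if "l < length cs" for l
  proof -
    have "v \<in> cycle_edge cs l \<longleftrightarrow> l = i \<or> Suc l mod length cs = i"
      using that i by (auto simp: cycle_edge_def nth_eq_iff_index_eq[OF distinct])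
    also have "\<dots> \<longleftrightarrow> l = i \<or> l = p"
      using that i unfolding p_def by (simp add: Suc_mod_eq_iff)
    finally show ?thesis .
  qed
  have "{e \<in> cycle_edges cs. v \<in> e} = {cycle_edge cs i, cycle_edge cs p}"
  proof
    show "{e \<in> cycle_edges cs. v \<in> e} \<subseteq> {cycle_edge cs i, cycle_edge cs p}"
      unfolding cycle_edges_def using incident by blast
    show "{cycle_edge cs i, cycle_edge cs p} \<subseteq> {e \<in> cycle_edges cs. v \<in> e}"
      unfolding cycle_edges_def using incident i(1) p(1) by blast
  qed
  moreover have "cycle_edge cs i \<noteq> cycle_edge cs p"
    using inj_onD[OF inj_on_cycle_edge, of i p] i p by blast
  ultimately show ?thesis
    by simp
qed

lemma card_cut_edges_cycle:
  "card (cut_edges (cycle_edges cs) X) =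
    card {i. i < length cs \<and> (cs ! i \<in> X) \<noteq> (cs ! (Suc i mod length cs) \<in> X)}"
proof -
  let ?I = "{i. i < length cs \<and> (cs ! i \<in> X) \<noteq> (cs ! (Suc i mod length cs) \<in> X)}"
  have "card (cycle_edge cs i \<inter> X) = 1 \<longleftrightarrow> (cs ! i \<in> X) \<noteq> (cs ! (Suc i mod length cs) \<in> X)"
    if "i < length cs" for i
    using card_doubleton_Int_eq_1[OF cycle_edge_neq[OF that]] unfolding cycle_edge_def .
  then have "cut_edges (cycle_edges cs) X = cycle_edge cs ` ?I"
    unfolding cut_edges_def cycle_edges_def by blast
  moreover have "inj_on (cycle_edge cs) ?I"
    by (rule inj_on_subset[OF inj_on_cycle_edge]) auto
  ultimately show ?thesis
    by (simp add: card_image)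
qed

lemma even_card_cut_edges_cycle: "even (card (cut_edges (cycle_edges cs) X))"
  using even_card_cyclic_changes[of "length cs" "\<lambda>i. cs ! i \<in> X"]
  by (simp add: card_cut_edges_cycle)

lemma two_le_card_cut_edges_cycle:
  assumes "u \<in> set cs \<inter> X" "v \<in> set cs - X"
  shows "2 \<le> card (cut_edges (cycle_edges cs) X)"
proof -
  obtain i i' where "i < length cs" "i' < length cs" "cs ! i \<in> X" "cs ! i' \<notin> X"
    using assms by (auto simp: in_set_conv_nth)
  then obtain l where "l < length cs" "(cs ! l \<in> X) \<noteq> (cs ! (Suc l mod length cs) \<in> X)"
    using cyclic_change_exists[of i "length cs" i' "\<lambda>i. cs ! i \<in> X"] by blast
  then have "card (cut_edges (cycle_edges cs) X) \<noteq> 0"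
    by (auto simp: card_cut_edges_cycle)
  then show ?thesis
    using even_card_cut_edges_cycle[of X] by presburger
qed

lemma two_cut_edges_cycle:
  assumes "u \<in> set cs \<inter> X" "v \<in> set cs - X"
  obtains e1 e2
  where "e1 \<in> cut_edges (cycle_edges cs) X" "e2 \<in> cut_edges (cycle_edges cs) X" "e1 \<noteq> e2"
proof -
  have "finite (cut_edges (cycle_edges cs) X)"
    unfolding cut_edges_def cycle_edges_def by simp
  with two_le_card_cut_edges_cycle[OF assms] show ?thesis
    using that card_le_Suc0_iff_eq[of "cut_edges (cycle_edges cs) X"] by fastforce
qed

end

section \<open>Perfect matchings and isomorphisms\<close>

definition perfect_matching_on :: "'a set \<Rightarrow> 'a set set \<Rightarrow> bool" where
  "perfect_matching_on T M \<longleftrightarrow> (\<forall>e\<in>M. e \<subseteq> T) \<and> (\<forall>v\<in>T. \<exists>!e. e \<in> M \<and> v \<in> e)"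

lemma perfect_matching_on_UN:
  assumes "\<And>i. i \<in> I \<Longrightarrow> perfect_matching_on (T i) (M i)"
    and "\<And>i i'. i \<in> I \<Longrightarrow> i' \<in> I \<Longrightarrow> i \<noteq> i' \<Longrightarrow> T i \<inter> T i' = {}"
  shows "perfect_matching_on (\<Union>i\<in>I. T i) (\<Union>i\<in>I. M i)"
  unfolding perfect_matching_on_def
proof (intro conjI ballI)
  fix e assume "e \<in> (\<Union>i\<in>I. M i)"
  then show "e \<subseteq> (\<Union>i\<in>I. T i)"
    using assms(1) unfolding perfect_matching_on_def by blast
next
  fix v assume "v \<in> (\<Union>i\<in>I. T i)"
  then obtain i where i: "i \<in> I" "v \<in> T i" by blast
  have only_i: "i' = i" if "i' \<in> I" "e \<in> M i'" "v \<in> e" for i' e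
    using assms(1)[OF that(1)] assms(2)[OF i(1) that(1)] that i(2)
    unfolding perfect_matching_on_def by blast
  show "\<exists>!e. e \<in> (\<Union>i\<in>I. M i) \<and> v \<in> e"
    using assms(1)[OF i(1)] i only_i unfolding perfect_matching_on_def by blast
qed

lemma perfect_matching_on_Un:
  assumes "perfect_matching_on T1 M1" "perfect_matching_on T2 M2" "T1 \<inter> T2 = {}"
  shows "perfect_matching_on (T1 \<union> T2) (M1 \<union> M2)"
proof -
  have "perfect_matching_on (\<Union>b. if b then T1 else T2) (\<Union>b. if b then M1 else M2)"
    by (rule perfect_matching_on_UN) (use assms in \<open>auto simp: Int_commute\<close>)
  then show ?thesis
    by (simp add: UNIV_bool Un_commute)
qed

lemma perfect_matching_on_edge: "perfect_matching_on e {e}"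
  unfolding perfect_matching_on_def by blast

lemma perfect_matching_del_vertices_edges:
  "perfect_matching_on (V - X) M \<Longrightarrow> M \<subseteq> E \<Longrightarrow> perfect_matching (V - X) (del_vertices_edges E X) M"
  unfolding perfect_matching_on_def perfect_matching_def del_vertices_edges_def by blast

lemma del_vertices_edges_empty [simp]: "del_vertices_edges E {} = E"
  unfolding del_vertices_edges_def by simp

lemma reach_sym:
  assumes "(\<lambda>a b. {a, b} \<in> E)\<^sup>*\<^sup>* u v"
  shows "(\<lambda>a b. {a, b} \<in> E)\<^sup>*\<^sup>* v u"
  using assms
proof (induction rule: rtranclp_induct)
  case (step y z)
  then have "{z, y} \<in> E"
    by (simp add: insert_commute)
  then show ?case
    using step.IH by (rule converse_rtranclp_into_rtranclp)
qed simp

lemma simple_graph_image: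
  assumes "inj_on f V" "simple_graph V E"
  shows "simple_graph (f ` V) ((`) f ` E)"
  unfolding simple_graph_def
proof (intro conjI ballI)
  show "finite (f ` V)"
    using assms(2) unfolding simple_graph_def by blast
next
  fix e' assume "e' \<in> (`) f ` E"
  then obtain u v where "e' = {f u, f v}" "u \<noteq> v" "u \<in> V" "v \<in> V"
    using assms(2) unfolding simple_graph_def by force
  then show "\<exists>u v. e' = {u, v} \<and> u \<noteq> v \<and> u \<in> f ` V \<and> v \<in> f ` V"
    using assms(1) by (auto dest: inj_onD)
qed

lemma graph_connected_image:
  assumes "graph_connected V E"
  shows "graph_connected (f ` V) ((`) f ` E)"
  unfolding graph_connected_def
proof (intro ballI)
  fix u' v' assume "u' \<in> f ` V" "v' \<in> f ` V"
  then obtain u v where uv: "u \<in> V" "v \<in> V" "u' = f u" "v' = f v"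
    by blast
  then have "(\<lambda>a b. {a, b} \<in> E)\<^sup>*\<^sup>* u v"
    using assms unfolding graph_connected_def by blast
  then show "(\<lambda>a b. {a, b} \<in> (`) f ` E)\<^sup>*\<^sup>* u' v'"
    unfolding uv
  proof (induction rule: rtranclp_induct)
    case (step y z)
    then have "{f y, f z} \<in> (`) f ` E"
      using image_eqI[of "{f y, f z}" "(`) f" "{y, z}"] by simp
    with step.IH show ?case
      by (simp add: rtranclp.rtrancl_into_rtrancl)
  qed simp
qed

context
  fixes f :: "'a \<Rightarrow> 'b" and V :: "'a set" and E :: "'a set set"
  assumes inj: "inj_on f V" and edges: "\<forall>e\<in>E. e \<subseteq> V"
begin

lemma image_edge_mem_iff: "e \<in> E \<Longrightarrow> v \<in> V \<Longrightarrow> f v \<in> f ` e \<longleftrightarrow> v \<in> e"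
  using inj edges by (auto simp: inj_on_image_mem_iff)

lemma perfect_matching_image:
  assumes "T \<subseteq> V" "perfect_matching T E M"
  shows "perfect_matching (f ` T) ((`) f ` E) ((`) f ` M)"
  unfolding perfect_matching_def
proof (intro conjI ballI)
  show "(`) f ` M \<subseteq> (`) f ` E"
    using assms(2) unfolding perfect_matching_def by blast
next
  fix v' assume "v' \<in> f ` T"
  then obtain v where v: "v \<in> T" "v' = f v" by blast
  have M: "M \<subseteq> E" "\<exists>!e. e \<in> M \<and> v \<in> e"
    using assms(2) v(1) unfolding perfect_matching_def by auto
  have mem: "f v \<in> f ` e \<longleftrightarrow> v \<in> e" if "e \<in> M" for e
    using image_edge_mem_iff M(1) that v(1) assms(1) by blast
  from M(2) obtain e where e: "e \<in> M" "v \<in> e" and unique: "\<And>e2. e2 \<in> M \<Longrightarrow> v \<in> e2 \<Longrightarrow> e2 = e"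
    by blast
  show "\<exists>!e'. e' \<in> (`) f ` M \<and> v' \<in> e'"
  proof
    show "f ` e \<in> (`) f ` M \<and> v' \<in> f ` e"
      using e v(2) by blast
    show "e' = f ` e" if "e' \<in> (`) f ` M \<and> v' \<in> e'" for e'
    proof -
      from that v(2) obtain e2 where "e2 \<in> M" "e' = f ` e2" "f v \<in> f ` e2"
        by auto
      then show ?thesis
        using mem unique by blast
    qed
  qed
qed

lemma del_vertices_edges_image:
  assumes "S \<subseteq> V"
  shows "(`) f ` del_vertices_edges E S = del_vertices_edges ((`) f ` E) (f ` S)"
proof -
  have "f ` e \<inter> f ` S = f ` (e \<inter> S)" if "e \<in> E" for e
    using inj edges that assms by (simp add: inj_on_image_Int)
  then show ?thesis
    unfolding del_vertices_edges_def by auto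
qed

lemma is_cycle_image:
  assumes "is_cycle E cs"
  shows "is_cycle ((`) f ` E) (map f cs)"
  unfolding is_cycle_def
proof (intro conjI allI impI)
  show "distinct (map f cs)"
    using assms is_cycle_set_subset[OF assms edges] inj
    unfolding is_cycle_def by (simp add: distinct_map inj_on_subset)
  show "3 \<le> length (map f cs)"
    using assms unfolding is_cycle_def by simp
  fix i assume "i < length (map f cs)"
  then have "{cs ! i, cs ! ((i + 1) mod length cs)} \<in> E"
    using assms unfolding is_cycle_def by simp
  then have "f ` {cs ! i, cs ! ((i + 1) mod length cs)} \<in> (`) f ` E"
    by blast
  with \<open>i < length (map f cs)\<close>
  show "{map f cs ! i, map f cs ! ((i + 1) mod length (map f cs))} \<in> (`) f ` E"
    by simp
qed

end

lemma matching_covered_image: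
  assumes bij: "bij_betw f V V'" and edges: "\<forall>e\<in>E. e \<subseteq> V" and mc: "matching_covered V E"
  shows "matching_covered V' ((`) f ` E)"
proof -
  have inj: "inj_on f V" and V': "V' = f ` V"
    using bij by (auto simp: bij_betw_def)
  have "\<exists>M. perfect_matching V' ((`) f ` E) M \<and> e' \<in> M" if "e' \<in> (`) f ` E" for e'
    using that mc perfect_matching_image[OF inj edges order_refl]
    unfolding V' matching_covered_def by blast
  then show ?thesis
    using mc simple_graph_image[OF inj] graph_connected_image card_image[OF inj]
    unfolding matching_covered_def V' by auto
qed

lemma is_cycle_inv_image:
  assumes bij: "bij_betw f V V'" and edges: "\<forall>e\<in>E. e \<subseteq> V" and cs: "is_cycle ((`) f ` E) cs"
  shows "is_cycle E (map (inv_into V f) cs)"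
proof -
  have inj: "inj_on f V" and V': "V' = f ` V"
    using bij by (auto simp: bij_betw_def)
  have "inv_into V f ` f ` e = e" if "e \<in> E" for e
    using that edges inj by (simp add: inv_into_image_cancel)
  then have inverse: "(`) (inv_into V f) ` (`) f ` E = E"
    by (simp add: image_image)
  have "inj_on (inv_into V f) V'"
    using V' inj_on_inv_into by blast
  moreover have "\<forall>e\<in>(`) f ` E. e \<subseteq> V'"
    using edges V' by auto
  ultimately have "is_cycle ((`) (inv_into V f) ` (`) f ` E) (map (inv_into V f) cs)"
    using cs by (rule is_cycle_image)
  then show ?thesis
    by (simp only: inverse)
qed

lemma cycle_extendable_image:
  assumes bij: "bij_betw f V V'" and edges: "\<forall>e\<in>E. e \<subseteq> V" and ext: "cycle_extendable V E"
  shows "cycle_extendable V' ((`) f ` E)"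
proof -
  have inj: "inj_on f V" and V': "V' = f ` V"
    using bij by (auto simp: bij_betw_def)
  have "\<exists>M. perfect_matching (V' - set cs) (del_vertices_edges ((`) f ` E) (set cs)) M"
    if cs: "is_cycle ((`) f ` E) cs" "even (length cs)" for cs
  proof -
    let ?cs = "map (inv_into V f) cs"
    have cycle: "is_cycle E ?cs"
      using is_cycle_inv_image[OF bij edges cs(1)] .
    then obtain M where M: "perfect_matching (V - set ?cs) (del_vertices_edges E (set ?cs)) M"
      using ext cs(2) unfolding cycle_extendable_def by auto
    have S: "set ?cs \<subseteq> V"
      using is_cycle_set_subset[OF cycle edges] .
    have "set cs \<subseteq> f ` V"
      by (rule is_cycle_set_subset[OF cs(1)]) (use edges in auto)
    then have f_S: "f ` set ?cs = set cs"
      using image_inv_into_cancel[of f V "f ` V" "set cs"] by simp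
    have "f ` (V - set ?cs) = V' - set cs"
      using inj S V' f_S by (simp add: inj_on_image_set_diff)
    moreover have "(`) f ` del_vertices_edges E (set ?cs) = del_vertices_edges ((`) f ` E) (set cs)"
      using del_vertices_edges_image[OF inj edges S] f_S by simp
    moreover have "\<forall>e\<in>del_vertices_edges E (set ?cs). e \<subseteq> V"
      using edges unfolding del_vertices_edges_def by auto
    ultimately show ?thesis
      using perfect_matching_image[OF inj _ Diff_subset M] by auto
  qed
  then show ?thesis
    using matching_covered_image[OF bij edges] ext unfolding cycle_extendable_def by blast
qed

section \<open>Half biwheels\<close>

lemma lab_simps:
  "lab_x m h ori c = (if h c then (c, 2 * m c + 1) else if ori c then (c, 2 * m c) else (c, 0))"
  "lab_w m h ori c = (if h c then (c, 2 * m c + 1) else if ori c then (c, 0) else (c, 2 * m c))"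
  "lab_y m h ori c = (if h c then (if ori c then (c, 0) else (c, 2 * m c)) else (c, 2 * m c + 1))"
  "lab_z m h ori c = (if h c then (if ori c then (c, 2 * m c) else (c, 0)) else (c, 2 * m c + 1))"
  by (simp_all add: lab_x_def lab_w_def lab_y_def lab_z_def first_corner_def second_corner_def
      hbw_hub_def hbw_corner0_def hbw_corner1_def)

lemma fst_lab [simp]:
  "fst (lab_x m h ori c) = c" "fst (lab_w m h ori c) = c"
  "fst (lab_y m h ori c) = c" "fst (lab_z m h ori c) = c"
  by (simp_all add: lab_simps)

lemma odd_snd_lab:
  "odd (snd (lab_x m h ori c)) \<longleftrightarrow> h c" "odd (snd (lab_w m h ori c)) \<longleftrightarrow> h c"
  "odd (snd (lab_y m h ori c)) \<longleftrightarrow> \<not> h c" "odd (snd (lab_z m h ori c)) \<longleftrightarrow> \<not> h c"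
  by (simp_all add: lab_simps)

lemma hbw_edges_iff:
  "e \<in> hbw_edges j n \<longleftrightarrow>
     (\<exists>p < 2 * n. e = {(j, p), (j, Suc p)}) \<or> (\<exists>q \<le> n. e = {(j, 2 * n + 1), (j, 2 * q)})"
  unfolding hbw_edges_def by auto

lemma fst_hbw_edge: "e \<in> hbw_edges j n \<Longrightarrow> v \<in> e \<Longrightarrow> fst v = j"
  unfolding hbw_edges_iff by auto

lemma hbw_edge_doubleton:
  assumes "e \<in> hbw_edges j n"
  shows "\<exists>a b. e = {a, b} \<and> a \<noteq> b \<and> a \<in> hbw_verts j n \<and> b \<in> hbw_verts j n"
  using assms unfolding hbw_edges_iff
proof (elim disjE exE conjE)
  fix p assume "p < 2 * n" "e = {(j, p), (j, Suc p)}"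
  then show ?thesis
    unfolding hbw_verts_def by (intro exI[of _ "(j, p)"] exI[of _ "(j, Suc p)"]) auto
next
  fix q assume "q \<le> n" "e = {(j, 2 * n + 1), (j, 2 * q)}"
  then show ?thesis
    unfolding hbw_verts_def by (intro exI[of _ "(j, 2 * n + 1)"] exI[of _ "(j, 2 * q)"]) auto
qed

lemma hbw_edge_crosses_odd:
  "e \<in> hbw_edges j n \<Longrightarrow> card (e \<inter> {v. odd (snd v)}) = 1"
  unfolding hbw_edges_iff by (auto simp: card_doubleton_Int_eq_1[unfolded One_nat_def])

definition pairing :: "nat \<Rightarrow> nat \<Rightarrow> nat \<Rightarrow> (nat \<times> nat) set set" where
  "pairing j s r = {{(j, s + 2 * q), (j, s + 2 * q + 1)} | q. q < r}"

lemma perfect_matching_on_pairing: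
  "perfect_matching_on {(j, p) | p. s \<le> p \<and> p < s + 2 * r} (pairing j s r)"
  unfolding perfect_matching_on_def
proof (intro conjI ballI)
  fix e assume "e \<in> pairing j s r"
  then show "e \<subseteq> {(j, p) | p. s \<le> p \<and> p < s + 2 * r}"
    unfolding pairing_def by auto
next
  fix v assume "v \<in> {(j, p) | p. s \<le> p \<and> p < s + 2 * r}"
  then obtain p where v: "v = (j, p)" "s \<le> p" "p < s + 2 * r"
    by blast
  define q where "q = (p - s) div 2"
  have p_eq: "p = s + 2 * q \<or> p = s + 2 * q + 1" and "q < r"
    using v unfolding q_def by presburger+
  let ?e = "{(j, s + 2 * q), (j, s + 2 * q + 1)}"
  show "\<exists>!e. e \<in> pairing j s r \<and> v \<in> e"
  proof (rule ex1I[of _ ?e])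
    show "?e \<in> pairing j s r \<and> v \<in> ?e"
      using \<open>q < r\<close> p_eq v(1) unfolding pairing_def by auto
  next
    fix e assume "e \<in> pairing j s r \<and> v \<in> e"
    then obtain q' where q': "e = {(j, s + 2 * q'), (j, s + 2 * q' + 1)}" "v \<in> e"
      unfolding pairing_def by blast
    with v(1) have "p = s + 2 * q' \<or> p = s + 2 * q' + 1"
      by auto
    with p_eq have "q' = q"
      by presburger
    with q'(1) show "e = ?e"
      by simp
  qed
qed

lemma pairing_subset_hbw_edges:
  assumes "s + 2 * r \<le> 2 * n + 1"
  shows "pairing j s r \<subseteq> hbw_edges j n"
proof
  fix e assume "e \<in> pairing j s r"
  then obtain q where "q < r" "e = {(j, s + 2 * q), (j, Suc (s + 2 * q))}"
    unfolding pairing_def by auto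
  with assms show "e \<in> hbw_edges j n"
    unfolding hbw_edges_iff by (intro disjI1 exI[of _ "s + 2 * q"]) auto
qed

definition hbw_matching :: "nat \<Rightarrow> nat \<Rightarrow> nat \<Rightarrow> (nat \<times> nat) set set" where
  "hbw_matching j n d =
    pairing j 0 d \<union> pairing j (2 * d + 1) (n - d) \<union> {{(j, 2 * n + 1), (j, 2 * d)}}"

lemma perfect_matching_on_hbw_matching:
  assumes "d \<le> n"
  shows "perfect_matching_on (hbw_verts j n) (hbw_matching j n d)"
proof -
  let ?low = "{(j, p) | p. 0 \<le> p \<and> p < 0 + 2 * d}"
  let ?high = "{(j, p) | p. 2 * d + 1 \<le> p \<and> p < 2 * d + 1 + 2 * (n - d)}"
  have "perfect_matching_on (?low \<union> ?high \<union> {(j, 2 * n + 1), (j, 2 * d)}) (hbw_matching j n d)"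
    unfolding hbw_matching_def
    by (intro perfect_matching_on_Un perfect_matching_on_pairing perfect_matching_on_edge)
      (use assms in auto)
  moreover have "?low \<union> ?high \<union> {(j, 2 * n + 1), (j, 2 * d)} = hbw_verts j n"
    using assms unfolding hbw_verts_def by auto
  ultimately show ?thesis
    by simp
qed

lemma hbw_matching_subset: "d \<le> n \<Longrightarrow> hbw_matching j n d \<subseteq> hbw_edges j n"
  unfolding hbw_matching_def using pairing_subset_hbw_edges[of _ _ n j]
  by (auto simp: hbw_edges_def)

lemma hbw_edge_in_matching:
  assumes "e \<in> hbw_edges j n"
  shows "\<exists>d \<le> n. e \<in> hbw_matching j n d"
  using assms unfolding hbw_edges_iff
proof (elim disjE exE conjE)
  fix p assume p: "p < 2 * n" "e = {(j, p), (j, Suc p)}"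
  show ?thesis
  proof (cases "even p")
    case True
    then have "e \<in> pairing j 0 n"
      using p unfolding pairing_def by (auto elim!: evenE)
    then show ?thesis
      unfolding hbw_matching_def by (intro exI[of _ n]) auto
  next
    case False
    then obtain q where "p = 2 * q + 1"
      by (auto elim!: oddE)
    then have "e \<in> pairing j 1 n"
      using p unfolding pairing_def by auto
    then show ?thesis
      unfolding hbw_matching_def by (intro exI[of _ 0]) auto
  qed
next
  fix q assume "q \<le> n" "e = {(j, 2 * n + 1), (j, 2 * q)}"
  then show ?thesis
    unfolding hbw_matching_def by auto
qed

lemma perfect_matching_on_hbw_minus_window:
  assumes "even a" "even b" "a \<le> b" "b \<le> 2 * n"
  shows "perfect_matching_on (hbw_verts j n - ({(j, 2 * n + 1)} \<union> {(j, p) | p. a \<le> p \<and> p \<le> b}))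
    (pairing j 0 (a div 2) \<union> pairing j (b + 1) ((2 * n - b) div 2))"
proof -
  have "perfect_matching_on ({(j, p) | p. 0 \<le> p \<and> p < 0 + 2 * (a div 2)} \<union>
      {(j, p) | p. b + 1 \<le> p \<and> p < b + 1 + 2 * ((2 * n - b) div 2)})
    (pairing j 0 (a div 2) \<union> pairing j (b + 1) ((2 * n - b) div 2))"
    by (intro perfect_matching_on_Un perfect_matching_on_pairing) (use assms in auto)
  moreover have "{(j, p) | p. 0 \<le> p \<and> p < 0 + 2 * (a div 2)} \<union>
      {(j, p) | p. b + 1 \<le> p \<and> p < b + 1 + 2 * ((2 * n - b) div 2)} =
      hbw_verts j n - ({(j, 2 * n + 1)} \<union> {(j, p) | p. a \<le> p \<and> p \<le> b})"
    using assms unfolding hbw_verts_def by (auto elim!: evenE)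
  ultimately show ?thesis
    by simp
qed

section \<open>Generalized prisms\<close>

locale prism =
  fixes k :: nat and m :: "nat \<Rightarrow> nat" and h ori :: "nat \<Rightarrow> bool"
  assumes three_le_k: "3 \<le> k"
begin

abbreviation "PV \<equiv> prism_verts k m"

abbreviation "PE \<equiv> prism_edges k m h ori"

definition hub :: "nat \<Rightarrow> nat \<times> nat" where
  "hub j = (j, 2 * m j + 1)"

definition nxt :: "nat \<Rightarrow> nat" where
  "nxt c = Suc c mod k"

definition prv :: "nat \<Rightarrow> nat" where
  "prv j = (if j = 0 then k - 1 else j - 1)"

definition xw_edge :: "nat \<Rightarrow> (nat \<times> nat) set" where
  "xw_edge c = {lab_x m h ori c, lab_w m h ori (nxt c)}"

definition yz_edge :: "nat \<Rightarrow> (nat \<times> nat) set" where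
  "yz_edge c = {lab_y m h ori c, lab_z m h ori (nxt c)}"

definition junction :: "nat \<Rightarrow> (nat \<times> nat) set set" where
  "junction c = {xw_edge c, yz_edge c}"

definition junction_edge :: "(nat \<times> nat) set \<Rightarrow> bool" where
  "junction_edge e \<longleftrightarrow> (\<exists>c<k. e \<in> junction c)"

definition block :: "nat \<Rightarrow> (nat \<times> nat) set" where
  "block j = {v \<in> PV. fst v = j}"

lemma mem_PV_iff: "v \<in> PV \<longleftrightarrow> fst v < k \<and> snd v \<le> 2 * m (fst v) + 1"
  unfolding prism_verts_def hbw_verts_def by (cases v) auto

lemma block_eq: "j < k \<Longrightarrow> block j = hbw_verts j (m j)"
  unfolding block_def hbw_verts_def by (auto simp: mem_PV_iff)

lemma PE_iff: "e \<in> PE \<longleftrightarrow> (\<exists>j<k. e \<in> hbw_edges j (m j)) \<or> junction_edge e"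
  unfolding prism_edges_def junction_edge_def junction_def xw_edge_def yz_edge_def nxt_def by auto

lemma nxt_less: "nxt c < k"
  using three_le_k unfolding nxt_def by simp

lemma prv_less: "j < k \<Longrightarrow> prv j < k"
  using three_le_k unfolding prv_def by auto

lemma nxt_eq_iff: "c < k \<Longrightarrow> j < k \<Longrightarrow> nxt c = j \<longleftrightarrow> c = prv j"
  unfolding nxt_def prv_def by (rule Suc_mod_eq_iff)

lemma nxt_prv: "j < k \<Longrightarrow> nxt (prv j) = j"
  by (simp add: nxt_eq_iff prv_less)

lemma nxt_neq: "c < k \<Longrightarrow> nxt c \<noteq> c"
  using Suc_mod_neq[of c k] three_le_k unfolding nxt_def by simp

lemma prv_neq: "prv j \<noteq> j"
  using three_le_k unfolding prv_def by auto

lemma nxt_nxt_neq: "c < k \<Longrightarrow> nxt (nxt c) \<noteq> c"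
  using three_le_k unfolding nxt_def by (cases "Suc c = k"; cases "Suc (Suc c) = k") auto

lemma lab_in_block:
  "c < k \<Longrightarrow> lab_x m h ori c \<in> block c" "c < k \<Longrightarrow> lab_w m h ori c \<in> block c"
  "c < k \<Longrightarrow> lab_y m h ori c \<in> block c" "c < k \<Longrightarrow> lab_z m h ori c \<in> block c"
  by (auto simp: block_def mem_PV_iff lab_simps)

lemma fst_junction_edge: "c < k \<Longrightarrow> e \<in> junction c \<Longrightarrow> fst ` e = {c, nxt c}"
  unfolding junction_def xw_edge_def yz_edge_def by auto

lemma junction_unique:
  assumes "c < k" "c' < k" "e \<in> junction c" "e \<in> junction c'"
  shows "c = c'"
proof -
  have "{c, nxt c} = {c', nxt c'}"
    using fst_junction_edge assms by metis
  then show ?thesis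
    using nxt_nxt_neq[OF assms(1)] by (auto simp: doubleton_eq_iff)
qed

lemma junction_subset_PE: "c < k \<Longrightarrow> junction c \<subseteq> PE"
  by (auto simp: PE_iff junction_edge_def)

lemma junction_edge_doubleton:
  assumes "c < k" "e \<in> junction c"
  shows "\<exists>a b. e = {a, b} \<and> a \<in> block c \<and> b \<in> block (nxt c)"
  using assms lab_in_block[of c] lab_in_block[OF nxt_less, of c]
  unfolding junction_def xw_edge_def yz_edge_def by blast

lemma junction_vertex:
  assumes "c < k" "v \<in> \<Union>(junction c)"
  shows "(fst v = c \<or> fst v = nxt c) \<and> (snd v = 0 \<or> snd v = 2 * m (fst v) \<or> v = hub (fst v))"
  using assms
  by (cases "h c"; cases "ori c"; cases "h (nxt c)"; cases "ori (nxt c)")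
    (auto simp: junction_def xw_edge_def yz_edge_def lab_simps hub_def)

lemma block_Int_junction:
  assumes "c < k" "i = c \<or> i = nxt c"
  shows "\<exists>\<kappa>. (\<kappa> = 0 \<or> \<kappa> = 2 * m i) \<and> block i \<inter> \<Union>(junction c) = {hub i, (i, \<kappa>)}"
proof -
  have "block i \<inter> \<Union>(junction c) =
      (if i = c then {lab_x m h ori c, lab_y m h ori c}
       else {lab_w m h ori (nxt c), lab_z m h ori (nxt c)})"
    using assms nxt_neq[of c] lab_in_block[of c] lab_in_block[of "nxt c"] nxt_less
    by (auto simp: junction_def xw_edge_def yz_edge_def block_def)
  then show ?thesis
    using assms by (cases "h i"; cases "ori i") (auto simp: lab_simps hub_def)
qed

lemma xw_edge_Int_yz_edge: "c < k \<Longrightarrow> xw_edge c \<inter> yz_edge c = {}"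
  using nxt_neq[of c]
  by (cases "h c"; cases "ori c"; cases "h (nxt c)"; cases "ori (nxt c)")
    (auto simp: xw_edge_def yz_edge_def lab_simps)

lemma junction_partner_exists: "c < k \<Longrightarrow> e \<in> junction c \<Longrightarrow> \<exists>e' \<in> junction c. e' \<noteq> e"
  using xw_edge_Int_yz_edge[of c] unfolding junction_def by (auto simp: xw_edge_def)

lemma junction_partner_hub:
  assumes "c < k" "e \<in> junction c" "e' \<in> junction c" "e \<noteq> e'" "(j, p) \<in> e" "p \<le> 2 * m j"
  shows "hub j \<in> e'"
  using assms nxt_neq[of c]
  by (cases "h c"; cases "ori c"; cases "h (nxt c)"; cases "ori (nxt c)")
    (auto simp: junction_def xw_edge_def yz_edge_def lab_simps hub_def)

lemma junction_partner_corner: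
  assumes "c < k" "e \<in> junction c" "e' \<in> junction c" "e \<noteq> e'" "hub j \<in> e"
  shows "\<exists>p \<le> 2 * m j. (j, p) \<in> e'"
  using assms nxt_neq[of c]
  by (cases "h c"; cases "ori c"; cases "h (nxt c)"; cases "ori (nxt c)")
    (auto simp: junction_def xw_edge_def yz_edge_def lab_simps hub_def)

lemma junction_edge_at_corner_unique:
  assumes j: "j < k" "1 \<le> m j" "p \<le> 2 * m j"
    and e: "junction_edge e1" "junction_edge e2" "(j, p) \<in> e1" "(j, p) \<in> e2"
  shows "e1 = e2"
proof -
  have at_labels:
    "(j, p) \<in> xw_edge j \<Longrightarrow> lab_x m h ori j = (j, p)" "(j, p) \<in> yz_edge j \<Longrightarrow> lab_y m h ori j = (j, p)"
    "(j, p) \<in> xw_edge (prv j) \<Longrightarrow> lab_w m h ori j = (j, p)"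
    "(j, p) \<in> yz_edge (prv j) \<Longrightarrow> lab_z m h ori j = (j, p)"
    using nxt_neq[OF j(1)] prv_neq[of j] nxt_prv[OF j(1)]
    unfolding xw_edge_def yz_edge_def by (auto dest: arg_cong[of _ _ fst])
  have cases:
    "(e = xw_edge j \<and> lab_x m h ori j = (j, p)) \<or> (e = yz_edge j \<and> lab_y m h ori j = (j, p)) \<or>
     (e = xw_edge (prv j) \<and> lab_w m h ori j = (j, p)) \<or>
     (e = yz_edge (prv j) \<and> lab_z m h ori j = (j, p))"
    if je: "junction_edge e" and pe: "(j, p) \<in> e" for e
  proof -
    obtain c where c: "c < k" "e \<in> junction c"
      using je unfolding junction_edge_def by blast
    then have "j = c \<or> j = nxt c"
      using fst_junction_edge pe by force
    then have "c = j \<or> c = prv j"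
      using nxt_eq_iff[OF c(1) j(1)] by blast
    then show ?thesis
      using c(2) pe at_labels unfolding junction_def by blast
  qed
  have distinct_labels:
    "\<not> (lab_x m h ori j = (j, p) \<and> lab_y m h ori j = (j, p)) \<and>
     \<not> (lab_x m h ori j = (j, p) \<and> lab_w m h ori j = (j, p)) \<and>
     \<not> (lab_x m h ori j = (j, p) \<and> lab_z m h ori j = (j, p)) \<and>
     \<not> (lab_y m h ori j = (j, p) \<and> lab_w m h ori j = (j, p)) \<and>
     \<not> (lab_y m h ori j = (j, p) \<and> lab_z m h ori j = (j, p)) \<and>
     \<not> (lab_w m h ori j = (j, p) \<and> lab_z m h ori j = (j, p))"
    using j(2,3) by (cases "h j"; cases "ori j") (auto simp: lab_simps)
  from cases[OF e(1,3)] cases[OF e(2,4)] show ?thesis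
    by (elim disjE conjE; use distinct_labels in blast)
qed

lemma hub_spoke_not_junction_edge: "\<not> junction_edge {hub j, (j, q)}"
proof
  assume "junction_edge {hub j, (j, q)}"
  then obtain c where "c < k" "{hub j, (j, q)} \<in> junction c"
    unfolding junction_edge_def by blast
  then have "{j} = {c, nxt c}"
    using fst_junction_edge by (fastforce simp: hub_def)
  then show False
    using nxt_neq[OF \<open>c < k\<close>] by (auto simp: doubleton_eq_iff)
qed

lemma spoke_eq_iff:
  assumes "q \<le> 2 * m j" "q' \<le> 2 * m j"
  shows "{hub j, (j, q)} = {hub j, (j, q')} \<longleftrightarrow> q = q'"
  using assms by (auto simp: hub_def doubleton_eq_iff)

lemma path_vertex_edge_cases:
  assumes "j < k" "p \<le> 2 * m j" "e \<in> PE" "(j, p) \<in> e"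
  shows "(p < 2 * m j \<and> e = {(j, p), (j, Suc p)}) \<or> (0 < p \<and> e = {(j, p - 1), (j, p)}) \<or>
    (even p \<and> e = {hub j, (j, p)}) \<or> (junction_edge e \<and> (p = 0 \<or> p = 2 * m j))"
proof (cases "junction_edge e")
  case True
  then obtain c where "c < k" "e \<in> junction c"
    unfolding junction_edge_def by blast
  with assms(4) have "p = 0 \<or> p = 2 * m j \<or> p = 2 * m j + 1"
    using junction_vertex[of c "(j, p)"] by (auto simp: hub_def)
  with True assms(2) show ?thesis
    by auto
next
  case False
  then obtain j' where "e \<in> hbw_edges j' (m j')"
    using assms(3) unfolding PE_iff by blast
  moreover from this have "j' = j"
    using fst_hbw_edge assms(4) by fastforce
  ultimately have "(\<exists>q < 2 * m j. e = {(j, q), (j, Suc q)}) \<or> (\<exists>q \<le> m j. e = {hub j, (j, 2 * q)})"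
    unfolding hbw_edges_iff hub_def by simp
  then show ?thesis
  proof (elim disjE exE conjE)
    fix q assume q: "q < 2 * m j" "e = {(j, q), (j, Suc q)}"
    with assms(4) have "p = q \<or> p = Suc q"
      by auto
    with q show ?thesis
      by (elim disjE) simp_all
  next
    fix q assume q: "q \<le> m j" "e = {hub j, (j, 2 * q)}"
    with assms(2,4) have "p = 2 * q"
      by (auto simp: hub_def)
    with q show ?thesis
      by simp
  qed
qed

lemma hub_edge_cases:
  assumes "j < k" "e \<in> PE" "hub j \<in> e"
  shows "(\<exists>q \<le> m j. e = {hub j, (j, 2 * q)}) \<or> junction_edge e"
proof (cases "junction_edge e")
  case False
  then obtain j' where "e \<in> hbw_edges j' (m j')"
    using assms(2) unfolding PE_iff by blast
  moreover from this have "j' = j"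
    using fst_hbw_edge assms(3) by (fastforce simp: hub_def)
  ultimately show ?thesis
    using assms(3) unfolding hbw_edges_iff by (auto simp: hub_def)
qed simp

lemma prism_edge_doubleton:
  assumes "e \<in> PE"
  shows "\<exists>a b. e = {a, b} \<and> a \<noteq> b \<and> a \<in> PV \<and> b \<in> PV"
proof (cases "junction_edge e")
  case True
  then obtain c where c: "c < k" "e \<in> junction c"
    unfolding junction_edge_def by blast
  then show ?thesis
    using junction_edge_doubleton[OF c] nxt_neq[OF c(1)] unfolding block_def by fastforce
next
  case False
  then obtain j where "j < k" "e \<in> hbw_edges j (m j)"
    using assms unfolding PE_iff by blast
  then show ?thesis
    using hbw_edge_doubleton block_eq unfolding block_def by blast
qed

lemma cut_edges_block:
  assumes j: "j < k"
  shows "cut_edges PE (block j) = junction j \<union> junction (prv j)"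
proof -
  have "card (e \<inter> block j) = 1 \<longleftrightarrow> e \<in> junction j \<union> junction (prv j)" if e: "e \<in> PE" for e
  proof (cases "junction_edge e")
    case True
    then obtain c where c: "c < k" "e \<in> junction c"
      unfolding junction_edge_def by blast
    then obtain a b where ab: "e = {a, b}" "a \<in> block c" "b \<in> block (nxt c)"
      using junction_edge_doubleton by blast
    have "a \<noteq> b"
      using ab nxt_neq[OF c(1)] by (auto simp: block_def)
    then have "card (e \<inter> block j) = 1 \<longleftrightarrow> (c = j) \<noteq> (nxt c = j)"
      using ab card_doubleton_Int_eq_1[of a b "block j"] by (auto simp: block_def)
    also have "\<dots> \<longleftrightarrow> c = j \<or> c = prv j"
      using nxt_eq_iff[OF c(1) j] nxt_neq[OF c(1)] by blast
    also have "\<dots> \<longleftrightarrow> e \<in> junction j \<union> junction (prv j)"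
      using junction_unique[OF c(1) j c(2)] junction_unique[OF c(1) prv_less[OF j] c(2)] c(2)
      by blast
    finally show ?thesis .
  next
    case False
    then obtain j' where "j' < k" "e \<in> hbw_edges j' (m j')"
      using e unfolding PE_iff by blast
    then obtain a b where "e = {a, b}" "a \<noteq> b" "a \<in> block j'" "b \<in> block j'"
      using hbw_edge_doubleton block_eq by metis
    then have "card (e \<inter> block j) \<noteq> 1"
      using card_doubleton_Int_eq_1[of a b "block j"] by (auto simp: block_def)
    moreover have "e \<notin> junction j \<union> junction (prv j)"
      using False j prv_less unfolding junction_edge_def by blast
    ultimately show ?thesis
      by blast
  qed
  then show ?thesis
    using junction_subset_PE[OF j] junction_subset_PE[OF prv_less[OF j]]
    unfolding cut_edges_def by blast
qed

lemma junction_edge_crosses_odd_iff: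
  assumes "c < k" "e \<in> junction c"
  shows "card (e \<inter> {v. odd (snd v)}) = 1 \<longleftrightarrow> h c \<noteq> h (nxt c)"
proof -
  have "lab_x m h ori c \<noteq> lab_w m h ori (nxt c)" "lab_y m h ori c \<noteq> lab_z m h ori (nxt c)"
    using nxt_neq[OF assms(1)] by (metis fst_lab(1,2), metis fst_lab(3,4))
  with assms show ?thesis
    unfolding junction_def xw_edge_def yz_edge_def
    by (auto simp: card_doubleton_Int_eq_1[unfolded One_nat_def] odd_snd_lab)
qed

lemma uncrossed_odd_edges:
  "{e \<in> PE. card (e \<inter> {v. odd (snd v)}) \<noteq> 1} = (\<Union>c \<in> {c. c < k \<and> h c = h (nxt c)}. junction c)"
  using hbw_edge_crosses_odd junction_edge_crosses_odd_iff junction_subset_PE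
  unfolding PE_iff junction_edge_def by blast

lemma blocks_disjoint: "i \<noteq> j \<Longrightarrow> block i \<inter> block j = {}"
  unfolding block_def by auto

lemma UN_block: "(\<Union>j<k. block j) = PV"
  unfolding block_def by (auto simp: mem_PV_iff)

lemma hbw_edges_subset_PE: "j < k \<Longrightarrow> hbw_edges j (m j) \<subseteq> PE"
  by (auto simp: PE_iff)

lemma perfect_matching_of_blocks:
  assumes "\<And>j. j < k \<Longrightarrow> perfect_matching_on (block j - X) (M j) \<and> M j \<subseteq> hbw_edges j (m j)"
  shows "perfect_matching_on (PV - X) (\<Union>j<k. M j)" "(\<Union>j<k. M j) \<subseteq> PE"
proof -
  have "perfect_matching_on (\<Union>j<k. block j - X) (\<Union>j<k. M j)"
    by (rule perfect_matching_on_UN) (use assms blocks_disjoint in blast)+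
  moreover have "(\<Union>j<k. block j - X) = PV - X"
    using UN_block by blast
  ultimately show "perfect_matching_on (PV - X) (\<Union>j<k. M j)"
    by simp
  show "(\<Union>j<k. M j) \<subseteq> PE"
    using assms hbw_edges_subset_PE by blast
qed

lemma block_matching:
  assumes "j < k" "d \<le> m j"
  shows "perfect_matching_on (block j) (hbw_matching j (m j) d)"
    and "hbw_matching j (m j) d \<subseteq> hbw_edges j (m j)"
  using assms perfect_matching_on_hbw_matching hbw_matching_subset by (simp_all add: block_eq)

lemma block_minus_window_matching:
  assumes "j < k" "even a" "even b" "a \<le> b" "b \<le> 2 * m j"
  shows "\<exists>M. perfect_matching_on (block j - ({hub j} \<union> {(j, p) | p. a \<le> p \<and> p \<le> b})) M \<and>
    M \<subseteq> hbw_edges j (m j)"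
proof (intro exI conjI)
  show "perfect_matching_on (block j - ({hub j} \<union> {(j, p) | p. a \<le> p \<and> p \<le> b}))
      (pairing j 0 (a div 2) \<union> pairing j (b + 1) ((2 * m j - b) div 2))"
    using perfect_matching_on_hbw_minus_window[OF assms(2-5), of j] assms(1)
    by (simp add: block_eq hub_def)
  have "pairing j 0 (a div 2) \<subseteq> hbw_edges j (m j)"
    using assms by (intro pairing_subset_hbw_edges) auto
  moreover have "pairing j (b + 1) ((2 * m j - b) div 2) \<subseteq> hbw_edges j (m j)"
    using assms by (intro pairing_subset_hbw_edges) auto
  ultimately show
    "pairing j 0 (a div 2) \<union> pairing j (b + 1) ((2 * m j - b) div 2) \<subseteq> hbw_edges j (m j)"
    by blast
qed

lemma perfect_matching_containing_hbw_edge: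
  assumes "j < k" "e \<in> hbw_edges j (m j)"
  shows "\<exists>M. perfect_matching PV PE M \<and> e \<in> M"
proof -
  obtain d where d: "d \<le> m j" "e \<in> hbw_matching j (m j) d"
    using hbw_edge_in_matching[OF assms(2)] by blast
  define M where "M i = hbw_matching i (m i) (if i = j then d else 0)" for i
  have "perfect_matching_on (block i - {}) (M i) \<and> M i \<subseteq> hbw_edges i (m i)" if "i < k" for i
    using block_matching[OF that] d(1) unfolding M_def by simp
  from perfect_matching_of_blocks[OF this] have "perfect_matching PV PE (\<Union>i<k. M i)"
    using perfect_matching_del_vertices_edges[of PV "{}"] by simp
  moreover have "e \<in> (\<Union>i<k. M i)"
    using assms(1) d(2) unfolding M_def by auto
  ultimately show ?thesis
    by blast
qed

lemma block_minus_junction_matching: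
  assumes c: "c < k" and i: "i < k"
  shows "\<exists>M. perfect_matching_on (block i - \<Union>(junction c)) M \<and> M \<subseteq> hbw_edges i (m i)"
proof (cases "i = c \<or> i = nxt c")
  case True
  then obtain \<kappa> where \<kappa>: "\<kappa> = 0 \<or> \<kappa> = 2 * m i" "block i \<inter> \<Union>(junction c) = {hub i, (i, \<kappa>)}"
    using block_Int_junction[OF c] by blast
  then have "block i - \<Union>(junction c) = block i - ({hub i} \<union> {(i, p) | p. \<kappa> \<le> p \<and> p \<le> \<kappa>})"
    by auto
  then show ?thesis
    using block_minus_window_matching[OF i, of \<kappa> \<kappa>] \<kappa>(1) by auto
next
  case False
  then have "block i - \<Union>(junction c) = block i"
    using junction_vertex[OF c] unfolding block_def by auto
  then show ?thesis
    using block_matching[OF i, of 0] by auto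
qed

lemma perfect_matching_containing_junction:
  assumes c: "c < k"
  shows "\<exists>M. perfect_matching PV PE M \<and> junction c \<subseteq> M"
proof -
  let ?X = "\<Union>(junction c)"
  obtain M where M: "\<And>i. i < k \<Longrightarrow> perfect_matching_on (block i - ?X) (M i) \<and> M i \<subseteq> hbw_edges i (m i)"
    using block_minus_junction_matching[OF c] by metis
  have "perfect_matching_on ((PV - ?X) \<union> ?X) ((\<Union>i<k. M i) \<union> junction c)"
  proof (rule perfect_matching_on_Un)
    show "perfect_matching_on (PV - ?X) (\<Union>i<k. M i)"
      using perfect_matching_of_blocks(1)[OF M] .
    show "perfect_matching_on ?X (junction c)"
      using xw_edge_Int_yz_edge[OF c] unfolding perfect_matching_on_def junction_def by blast
  qed blast
  moreover have "(PV - ?X) \<union> ?X = PV"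
    using junction_subset_PE[OF c] prism_edge_doubleton by blast
  moreover have "(\<Union>i<k. M i) \<union> junction c \<subseteq> PE"
    using perfect_matching_of_blocks(2)[OF M] junction_subset_PE[OF c] by blast
  ultimately have "perfect_matching PV PE ((\<Union>i<k. M i) \<union> junction c)"
    using perfect_matching_del_vertices_edges[of PV "{}"] by simp
  then show ?thesis
    by blast
qed

abbreviation reach :: "nat \<times> nat \<Rightarrow> nat \<times> nat \<Rightarrow> bool" where
  "reach \<equiv> (\<lambda>a b. {a, b} \<in> PE)\<^sup>*\<^sup>*"

lemma reach_hub_in_block:
  assumes j: "j < k" and v: "v \<in> block j"
  shows "reach (hub j) v"
proof -
  obtain p where p: "v = (j, p)" "p \<le> 2 * m j + 1"
    using v j by (auto simp: block_eq hbw_verts_def)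
  have spoke: "reach (hub j) (j, 2 * q)" if "q \<le> m j" for q
  proof -
    have "{hub j, (j, 2 * q)} \<in> hbw_edges j (m j)"
      unfolding hbw_edges_iff hub_def using that by blast
    then show ?thesis
      using hbw_edges_subset_PE[OF j] by (intro r_into_rtranclp) auto
  qed
  have "p = 2 * m j + 1 \<or> (even p \<and> p \<le> 2 * m j) \<or> (odd p \<and> p < 2 * m j)"
    using p(2) by presburger
  then show ?thesis
  proof (elim disjE conjE)
    assume "p = 2 * m j + 1"
    then show ?thesis
      using p(1) by (simp add: hub_def)
  next
    assume "even p" "p \<le> 2 * m j"
    then show ?thesis
      using p(1) spoke by (auto elim!: evenE)
  next
    assume "odd p" "p < 2 * m j"
    then obtain q where q: "p = 2 * q + 1" "q < m j"
      by (auto elim!: oddE)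
    have "{(j, 2 * q), (j, Suc (2 * q))} \<in> hbw_edges j (m j)"
      unfolding hbw_edges_iff using q(2) by (intro disjI1 exI[of _ "2 * q"]) auto
    then have "{(j, 2 * q), (j, 2 * q + 1)} \<in> PE"
      using hbw_edges_subset_PE[OF j] by auto
    with spoke[of q] q p(1) show ?thesis
      by (simp add: rtranclp.rtrancl_into_rtrancl)
  qed
qed

lemma reach_hub_zero:
  assumes "j < k"
  shows "reach (hub 0) (hub j)"
  using assms
proof (induction j)
  case (Suc j)
  then have j: "j < k"
    by simp
  then have nxt_j: "nxt j = Suc j"
    using Suc.prems by (simp add: nxt_def)
  have "{lab_x m h ori j, lab_w m h ori (Suc j)} \<in> PE"
    using junction_subset_PE[OF j] nxt_j unfolding junction_def xw_edge_def by auto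
  with reach_hub_in_block[OF j lab_in_block(1)[OF j]]
  have "reach (hub j) (lab_w m h ori (Suc j))"
    by (rule rtranclp.rtrancl_into_rtrancl)
  then have "reach (hub j) (hub (Suc j))"
    using reach_sym[OF reach_hub_in_block[OF Suc.prems lab_in_block(2)[OF Suc.prems]]]
    by (rule rtranclp_trans)
  with Suc.IH[OF j] show ?case
    by (rule rtranclp_trans)
qed simp

lemma graph_connected_prism: "graph_connected PV PE"
  unfolding graph_connected_def
proof (intro ballI)
  fix u v assume "u \<in> PV" "v \<in> PV"
  then have u: "fst u < k" "u \<in> block (fst u)" and v: "fst v < k" "v \<in> block (fst v)"
    by (auto simp: mem_PV_iff block_def)
  have "reach u (hub 0)"
    using reach_sym[OF reach_hub_in_block[OF u]] reach_sym[OF reach_hub_zero[OF u(1)]]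
    by (rule rtranclp_trans)
  moreover have "reach (hub 0) v"
    using reach_hub_zero[OF v(1)] reach_hub_in_block[OF v] by (rule rtranclp_trans)
  ultimately show "reach u v"
    by (rule rtranclp_trans)
qed

lemma matching_covered_prism: "matching_covered PV PE"
  unfolding matching_covered_def
proof (intro conjI ballI)
  show "simple_graph PV PE"
    unfolding simple_graph_def using prism_edge_doubleton
    by (auto simp: prism_verts_def hbw_verts_def)
  show "graph_connected PV PE"
    by (rule graph_connected_prism)
  have "{(0, 0), (0, 1)} \<subseteq> PV"
    using three_le_k by (auto simp: mem_PV_iff)
  then show "card PV \<ge> 2"
    using card_mono[of PV "{(0, 0), (0, 1)}"] by (auto simp: prism_verts_def hbw_verts_def)
  fix e assume "e \<in> PE"
  then show "\<exists>M. perfect_matching PV PE M \<and> e \<in> M"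
    using perfect_matching_containing_hbw_edge perfect_matching_containing_junction
    unfolding PE_iff junction_edge_def by blast
qed

end

section \<open>Even cycles in generalized prisms\<close>

locale prism_cycle = prism +
  fixes cs :: "(nat \<times> nat) list"
  assumes cycle: "is_cycle PE cs" and even_length: "even (length cs)" and odd_k: "odd k"
begin

abbreviation "S \<equiv> set cs"

abbreviation "C \<equiv> cycle_edges cs"

lemma distinct_cs: "distinct cs" and length_cs: "3 \<le> length cs"
  using cycle unfolding is_cycle_def by auto

lemmas degree_two = cycle_degree[OF distinct_cs length_cs]

lemmas even_card_cut = even_card_cut_edges_cycle[OF distinct_cs length_cs]

lemma C_subset_PE: "C \<subseteq> PE"
  using cycle by (rule cycle_edges_subset)

lemma finite_C: "finite C"
  unfolding cycle_edges_def by simp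

lemma other_cycle_edge:
  assumes "v \<in> S"
  obtains e where "e \<in> C" "v \<in> e" "e \<noteq> e0"
proof -
  have "\<not> {e \<in> C. v \<in> e} \<subseteq> {e0}"
    using degree_two[OF assms] card_mono[of "{e0}" "{e \<in> C. v \<in> e}"] by auto
  then show ?thesis
    using that by blast
qed

definition junction_count :: "nat \<Rightarrow> nat" where
  "junction_count c = card (C \<inter> junction c)"

lemma even_junction_count_pair:
  assumes j: "j < k"
  shows "even (junction_count j + junction_count (prv j))"
proof -
  have "cut_edges C (block j) = C \<inter> junction j \<union> C \<inter> junction (prv j)"
    using cut_edges_block[OF j] C_subset_PE unfolding cut_edges_def by blast
  moreover have "C \<inter> junction j \<inter> (C \<inter> junction (prv j)) = {}"
    using junction_unique[OF j prv_less[OF j]] prv_neq[of j] by auto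
  ultimately have "card (cut_edges C (block j)) = junction_count j + junction_count (prv j)"
    unfolding junction_count_def by (simp add: card_Un_disjoint finite_C)
  then show ?thesis
    using even_card_cut[of "block j"] by simp
qed

lemma junction_count_parity: "j < k \<Longrightarrow> even (junction_count j) \<longleftrightarrow> even (junction_count 0)"
proof (induction j)
  case (Suc j)
  then have "even (junction_count (Suc j) + junction_count j)"
    using even_junction_count_pair[of "Suc j"] by (simp add: prv_def)
  with Suc show ?case
    by simp
qed simp

lemma even_junction_count:
  assumes "c < k"
  shows "even (junction_count c)"
proof (rule ccontr)
  assume odd_c: "odd (junction_count c)"
  have all_odd: "odd (junction_count c')" if "c' < k" for c'
    using junction_count_parity[OF that] junction_count_parity[OF assms] odd_c by simp
  (* The cycle edges joining positions of equal parity are its edges at the odd number of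
     junctions with h c = h (nxt c), so there would be an odd number of them; the other
     cycle edges form a cut, and |C| is even. *)
  let ?Mono = "{c. c < k \<and> h c = h (nxt c)}"
  let ?Odd = "{v :: nat \<times> nat. odd (snd v)}"
  have "{e \<in> C. card (e \<inter> ?Odd) \<noteq> 1} = C \<inter> {e \<in> PE. card (e \<inter> ?Odd) \<noteq> 1}"
    using C_subset_PE by blast
  then have uncrossed: "{e \<in> C. card (e \<inter> ?Odd) \<noteq> 1} = (\<Union>c \<in> ?Mono. C \<inter> junction c)"
    unfolding uncrossed_odd_edges by blast
  have "card (\<Union>c \<in> ?Mono. C \<inter> junction c) = (\<Sum>c \<in> ?Mono. junction_count c)"
    unfolding junction_count_def
  proof (rule card_UN_disjoint)
    show "\<forall>c\<in>?Mono. \<forall>c'\<in>?Mono. c \<noteq> c' \<longrightarrow> C \<inter> junction c \<inter> (C \<inter> junction c') = {}"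
      using junction_unique by blast
  qed (simp_all add: finite_C)
  then have "card {e \<in> C. card (e \<inter> ?Odd) \<noteq> 1} = (\<Sum>c \<in> ?Mono. junction_count c)"
    by (simp only: uncrossed)
  moreover have "{c \<in> ?Mono. odd (junction_count c)} = ?Mono"
    using all_odd by blast
  ultimately have "odd (card {e \<in> C. card (e \<inter> ?Odd) \<noteq> 1})"
    using odd_card_cyclic_agreements[OF odd_k, of h] by (simp add: even_sum_iff nxt_def)
  moreover have "even (card {e \<in> C. card (e \<inter> ?Odd) = 1})"
    using even_card_cut[of ?Odd] unfolding cut_edges_def .
  moreover have "card C = card {e \<in> C. card (e \<inter> ?Odd) = 1} + card {e \<in> C. card (e \<inter> ?Odd) \<noteq> 1}"
    using card_filter_split[OF finite_C] .
  ultimately show False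
    using even_length card_cycle_edges[OF distinct_cs length_cs] by simp
qed

lemma junction_in_cycle:
  assumes "c < k" "e \<in> junction c" "e \<in> C" "e' \<in> junction c"
  shows "e' \<in> C"
proof -
  have "xw_edge c \<noteq> yz_edge c"
    using xw_edge_Int_yz_edge[OF assms(1)] by (auto simp: xw_edge_def)
  moreover have "even (card (C \<inter> {xw_edge c, yz_edge c}))"
    using even_junction_count[OF assms(1)] unfolding junction_count_def junction_def .
  ultimately show ?thesis
    using assms(2-4) unfolding junction_def
    by (cases "xw_edge c \<in> C"; cases "yz_edge c \<in> C") auto
qed

lemma hub_in_cycle_of_junction_corner:
  assumes "e \<in> C" "junction_edge e" "(j, p) \<in> e" "p \<le> 2 * m j"
  shows "\<exists>e' \<in> C. junction_edge e' \<and> hub j \<in> e'"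
proof -
  obtain c where c: "c < k" "e \<in> junction c"
    using assms(2) unfolding junction_edge_def by blast
  obtain e' where e': "e' \<in> junction c" "e' \<noteq> e"
    using junction_partner_exists[OF c] by blast
  have "hub j \<in> e'"
    using junction_partner_hub[OF c e'(1) _ assms(3,4)] e'(2) by blast
  moreover have "e' \<in> C"
    using junction_in_cycle[OF c assms(1) e'(1)] .
  ultimately show ?thesis
    using c(1) e'(1) unfolding junction_edge_def by blast
qed

lemma corner_in_cycle_of_junction_hub:
  assumes "e \<in> C" "junction_edge e" "hub j \<in> e"
  shows "\<exists>p \<le> 2 * m j. (j, p) \<in> S"
proof -
  obtain c where c: "c < k" "e \<in> junction c"
    using assms(2) unfolding junction_edge_def by blast
  obtain e' where e': "e' \<in> junction c" "e' \<noteq> e"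
    using junction_partner_exists[OF c] by blast
  then have "e' \<subseteq> S"
    using junction_in_cycle[OF c assms(1)] cycle_edge_subset by blast
  then show ?thesis
    using junction_partner_corner[OF c e'(1) _ assms(3)] e'(2) by blast
qed

lemma cycle_edge_at_path_vertex:
  assumes "j < k" "p \<le> 2 * m j" "e \<in> C" "(j, p) \<in> e"
  shows "e = {(j, p), (j, Suc p)} \<or> e = {(j, p - 1), (j, p)} \<or> (even p \<and> hub j \<in> S)"
proof -
  have "e \<in> PE" "e \<subseteq> S"
    using assms(3) C_subset_PE cycle_edge_subset by blast+
  with path_vertex_edge_cases[OF assms(1,2) _ assms(4)] consider
    "e = {(j, p), (j, Suc p)}" | "e = {(j, p - 1), (j, p)}" | "even p" "hub j \<in> S" |
    "junction_edge e" "p = 0 \<or> p = 2 * m j"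
    by blast
  then show ?thesis
  proof cases
    case 4
    then have "even p"
      by auto
    moreover have "hub j \<in> S"
      using hub_in_cycle_of_junction_corner[OF assms(3) 4(1) assms(4,2)] cycle_edge_subset by blast
    ultimately show ?thesis
      by blast
  qed simp_all
qed

lemma path_left_end:
  assumes "j < k" "(j, p) \<in> S" "p \<le> 2 * m j" "p = 0 \<or> (j, p - 1) \<notin> S"
  shows "even p \<and> hub j \<in> S"
proof -
  obtain e where e: "e \<in> C" "(j, p) \<in> e" "e \<noteq> {(j, p), (j, Suc p)}"
    using other_cycle_edge[OF assms(2)] by metis
  have "e \<noteq> {(j, p - 1), (j, p)}"
  proof
    assume "e = {(j, p - 1), (j, p)}"
    moreover have "card e = 2" "e \<subseteq> S"
      using e(1) card_cycle_edge[OF distinct_cs length_cs] cycle_edge_subset by blast+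
    ultimately show False
      using assms(4) by auto
  qed
  then show ?thesis
    using cycle_edge_at_path_vertex[OF assms(1,3) e(1,2)] e(3) by blast
qed

lemma path_right_end:
  assumes "j < k" "(j, p) \<in> S" "p \<le> 2 * m j" "p = 2 * m j \<or> (j, Suc p) \<notin> S"
  shows "even p \<and> hub j \<in> S"
proof -
  obtain e where e: "e \<in> C" "(j, p) \<in> e" "e \<noteq> {(j, p - 1), (j, p)}"
    using other_cycle_edge[OF assms(2)] by metis
  have "e \<subseteq> S"
    using e(1) cycle_edge_subset by blast
  show ?thesis
  proof (cases "e = {(j, p), (j, Suc p)}")
    case True
    with \<open>e \<subseteq> S\<close> assms(4) have "p = 2 * m j" "(j, Suc p) \<in> S"
      by auto
    then show ?thesis
      by (simp add: hub_def)
  next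
    case False
    then show ?thesis
      using cycle_edge_at_path_vertex[OF assms(1,3) e(1,2)] e(3) by blast
  qed
qed

lemma path_vertex_of_hub:
  assumes "j < k" "hub j \<in> S"
  shows "\<exists>p \<le> 2 * m j. (j, p) \<in> S"
proof -
  obtain e where e: "e \<in> C" "hub j \<in> e"
    using other_cycle_edge[OF assms(2)] by metis
  have "e \<in> PE" "e \<subseteq> S"
    using e(1) C_subset_PE cycle_edge_subset by blast+
  from hub_edge_cases[OF assms(1) this(1) e(2)] show ?thesis
  proof
    assume "\<exists>q \<le> m j. e = {hub j, (j, 2 * q)}"
    then obtain q where "q \<le> m j" "e = {hub j, (j, 2 * q)}"
      by blast
    with \<open>e \<subseteq> S\<close> show ?thesis
      by (intro exI[of _ "2 * q"]) auto
  next
    assume "junction_edge e"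
    then show ?thesis
      using corner_in_cycle_of_junction_hub[OF e(1) _ e(2)] by blast
  qed
qed

lemma prefix_cut_edge:
  assumes j: "j < k" "p \<le> 2 * m j" "(j, p) \<notin> S"
    and e: "e \<in> cut_edges C {(j, q) | q. q < p}"
  shows "(\<exists>q<p. e = {hub j, (j, q)}) \<or> (junction_edge e \<and> (j, 0) \<in> e)"
proof -
  let ?L = "{(j, q) | q. q < p}"
  have eC: "e \<in> C" and one: "card (e \<inter> ?L) = 1"
    using e unfolding cut_edges_def by auto
  then have "e \<inter> ?L \<noteq> {}"
    by auto
  then obtain q where q: "(j, q) \<in> e" "q < p"
    by blast
  have eS: "e \<subseteq> S"
    using eC cycle_edge_subset by blast
  have inside: "card ({a, b} \<inter> ?L) \<noteq> 1" if "a \<noteq> b" "a \<in> ?L" "b \<in> ?L" for a b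
    using that by (simp add: card_doubleton_Int_eq_1)
  have "q \<le> 2 * m j" "e \<in> PE"
    using q(2) j(2) eC C_subset_PE by auto
  with path_vertex_edge_cases[OF j(1) _ _ q(1)] consider
    "q < 2 * m j" "e = {(j, q), (j, Suc q)}" | "0 < q" "e = {(j, q - 1), (j, q)}" |
    "e = {hub j, (j, q)}" | "junction_edge e" "q = 0 \<or> q = 2 * m j"
    by blast
  then show ?thesis
  proof cases
    case 1
    moreover from this eS j(3) have "Suc q \<noteq> p"
      by auto
    ultimately show ?thesis
      using one inside[of "(j, q)" "(j, Suc q)"] q(2) by auto
  next
    case 2
    then show ?thesis
      using one inside[of "(j, q - 1)" "(j, q)"] q(2) by auto
  next
    case 3
    then show ?thesis
      using q(2) by blast
  next
    case 4
    then show ?thesis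
      using q j(2) by auto
  qed
qed

lemma suffix_cut_edge:
  assumes j: "j < k" "(j, p) \<notin> S"
    and e: "e \<in> cut_edges C {(j, q) | q. p < q \<and> q \<le> 2 * m j}"
  shows "(\<exists>q. p < q \<and> q \<le> 2 * m j \<and> e = {hub j, (j, q)}) \<or> (junction_edge e \<and> (j, 2 * m j) \<in> e)"
proof -
  let ?R = "{(j, q) | q. p < q \<and> q \<le> 2 * m j}"
  have eC: "e \<in> C" and one: "card (e \<inter> ?R) = 1"
    using e unfolding cut_edges_def by auto
  then have "e \<inter> ?R \<noteq> {}"
    by auto
  then obtain q where q: "(j, q) \<in> e" "p < q" "q \<le> 2 * m j"
    by blast
  have eS: "e \<subseteq> S"
    using eC cycle_edge_subset by blast
  have inside: "card ({a, b} \<inter> ?R) \<noteq> 1" if "a \<noteq> b" "a \<in> ?R" "b \<in> ?R" for a b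
    using that by (simp add: card_doubleton_Int_eq_1)
  have "e \<in> PE"
    using eC C_subset_PE by auto
  with path_vertex_edge_cases[OF j(1) q(3) _ q(1)] consider
    "q < 2 * m j" "e = {(j, q), (j, Suc q)}" | "0 < q" "e = {(j, q - 1), (j, q)}" |
    "e = {hub j, (j, q)}" | "junction_edge e" "q = 0 \<or> q = 2 * m j"
    by blast
  then show ?thesis
  proof cases
    case 1
    then show ?thesis
      using one inside[of "(j, q)" "(j, Suc q)"] q(2) by auto
  next
    case 2
    from this eS j(2) have "q - 1 \<noteq> p"
      by auto
    then have both: "(j, q - 1) \<noteq> (j, q)" "(j, q - 1) \<in> ?R" "(j, q) \<in> ?R"
      using q 2(1) by auto
    show ?thesis
      using one inside[OF both] 2(2) by simp
  next
    case 3
    then show ?thesis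
      using q by blast
  next
    case 4
    then show ?thesis
      using q by auto
  qed
qed

lemma prefix_spokes:
  assumes j: "j < k" "1 \<le> m j" "p \<le> 2 * m j" and gap: "(j, p) \<notin> S"
    and a: "(j, a) \<in> S" "a < p" and hub: "hub j \<in> S"
  shows "\<exists>q<p. {hub j, (j, q)} \<in> C"
    and "\<not> (\<exists>e\<in>C. junction_edge e \<and> (j, 0) \<in> e) \<Longrightarrow>
      \<exists>q q'. q < p \<and> q' < p \<and> q \<noteq> q' \<and> {hub j, (j, q)} \<in> C \<and> {hub j, (j, q')} \<in> C"
proof -
  let ?L = "{(j, q) | q. q < p}"
  have "(j, a) \<in> S \<inter> ?L" "hub j \<in> S - ?L"
    using a hub j(3) by (auto simp: hub_def)
  then obtain e1 e2 where e12: "e1 \<in> cut_edges C ?L" "e2 \<in> cut_edges C ?L" "e1 \<noteq> e2"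
    by (rule two_cut_edges_cycle[OF distinct_cs length_cs])
  then have C: "e1 \<in> C" "e2 \<in> C"
    unfolding cut_edges_def by auto
  note cases = prefix_cut_edge[OF j(1,3) gap e12(1)] prefix_cut_edge[OF j(1,3) gap e12(2)]
  have "\<not> (junction_edge e1 \<and> (j, 0) \<in> e1 \<and> junction_edge e2 \<and> (j, 0) \<in> e2)"
    using junction_edge_at_corner_unique[OF j(1,2), of 0] e12(3) by auto
  then have "(\<exists>q<p. e1 = {hub j, (j, q)}) \<or> (\<exists>q<p. e2 = {hub j, (j, q)})"
    using cases by blast
  then show "\<exists>q<p. {hub j, (j, q)} \<in> C"
    using C by blast
  assume "\<not> (\<exists>e\<in>C. junction_edge e \<and> (j, 0) \<in> e)"
  with cases C obtain q q' where "q < p" "e1 = {hub j, (j, q)}" "q' < p" "e2 = {hub j, (j, q')}"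
    by blast
  with C e12(3) show "\<exists>q q'. q < p \<and> q' < p \<and> q \<noteq> q' \<and> {hub j, (j, q)} \<in> C \<and> {hub j, (j, q')} \<in> C"
    by (intro exI[of _ q] exI[of _ q']) auto
qed

lemma suffix_spoke:
  assumes j: "j < k" "1 \<le> m j" and gap: "(j, p) \<notin> S"
    and b: "(j, b) \<in> S" "p < b" "b \<le> 2 * m j" and hub: "hub j \<in> S"
  shows "\<exists>q. p < q \<and> q \<le> 2 * m j \<and> {hub j, (j, q)} \<in> C"
proof -
  let ?R = "{(j, q) | q. p < q \<and> q \<le> 2 * m j}"
  have "(j, b) \<in> S \<inter> ?R" "hub j \<in> S - ?R"
    using b hub by (auto simp: hub_def)
  then obtain f1 f2 where f12: "f1 \<in> cut_edges C ?R" "f2 \<in> cut_edges C ?R" "f1 \<noteq> f2"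
    by (rule two_cut_edges_cycle[OF distinct_cs length_cs])
  then have "f1 \<in> C" "f2 \<in> C"
    unfolding cut_edges_def by auto
  moreover have "\<not> (junction_edge f1 \<and> (j, 2 * m j) \<in> f1 \<and> junction_edge f2 \<and> (j, 2 * m j) \<in> f2)"
    using junction_edge_at_corner_unique[OF j(1,2), of "2 * m j"] f12(3) by auto
  ultimately show ?thesis
    using suffix_cut_edge[OF j(1) gap f12(1)] suffix_cut_edge[OF j(1) gap f12(2)] by blast
qed

lemma path_interval:
  assumes j: "j < k" and hub: "hub j \<in> S"
    and a: "(j, a) \<in> S" "a < p" and b: "(j, b) \<in> S" "p < b" "b \<le> 2 * m j"
  shows "(j, p) \<in> S"
proof (rule ccontr)
  assume gap: "(j, p) \<notin> S"
  have m: "1 \<le> m j" and p: "p \<le> 2 * m j"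
    using a b by simp_all
  obtain qR where qR: "p < qR" "qR \<le> 2 * m j" "{hub j, (j, qR)} \<in> C"
    using suffix_spoke[OF j m gap b hub] by blast
  (* A junction edge of C at a corner brings its partner, a junction edge at the hub, onto
     C; so together with the spokes leading to both sides of the gap, the hub always gets
     three cycle edges. *)
  let ?H = "{e \<in> C. hub j \<in> e}"
  have "3 \<le> card ?H"
  proof (cases "\<exists>e \<in> C. junction_edge e \<and> ((j, 0) \<in> e \<or> (j, 2 * m j) \<in> e)")
    case True
    then obtain \<eta> where \<eta>: "\<eta> \<in> C" "junction_edge \<eta>" "hub j \<in> \<eta>"
      using hub_in_cycle_of_junction_corner[of _ j 0]
        hub_in_cycle_of_junction_corner[of _ j "2 * m j"] by auto
    obtain qL where qL: "qL < p" "{hub j, (j, qL)} \<in> C"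
      using prefix_spokes(1)[OF j m p gap a hub] by blast
    have "{hub j, (j, qL)} \<noteq> {hub j, (j, qR)}"
      using spoke_eq_iff[of qL j qR] qL(1) qR(1,2) p by simp
    moreover have "{hub j, (j, qL)} \<noteq> \<eta>" "{hub j, (j, qR)} \<noteq> \<eta>"
      using \<eta>(2) hub_spoke_not_junction_edge by blast+
    moreover have sub: "{{hub j, (j, qL)}, {hub j, (j, qR)}, \<eta>} \<subseteq> ?H"
      using qL(2) qR(3) \<eta>(1,3) by blast
    ultimately show ?thesis
      using card_mono[OF _ sub] finite_C by simp
  next
    case False
    then obtain q q' where q: "q < p" "q' < p" "q \<noteq> q'" "{hub j, (j, q)} \<in> C" "{hub j, (j, q')} \<in> C"
      using prefix_spokes(2)[OF j m p gap a hub] by blast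
    then have "{hub j, (j, q)} \<noteq> {hub j, (j, q')}" "{hub j, (j, q)} \<noteq> {hub j, (j, qR)}"
      "{hub j, (j, q')} \<noteq> {hub j, (j, qR)}"
      using spoke_eq_iff[of _ j] qR(1,2) p by auto
    moreover have sub: "{{hub j, (j, q)}, {hub j, (j, q')}, {hub j, (j, qR)}} \<subseteq> ?H"
      using q(4,5) qR(3) by blast
    ultimately show ?thesis
      using card_mono[OF _ sub] finite_C by simp
  qed
  then show False
    using degree_two[OF hub] by simp
qed

lemma path_trace_interval:
  assumes j: "j < k" and p0: "(j, p0) \<in> S" "p0 \<le> 2 * m j"
  obtains a b where "hub j \<in> S" "even a" "even b" "a \<le> b" "b \<le> 2 * m j"
    "\<And>p. p \<le> 2 * m j \<Longrightarrow> (j, p) \<in> S \<longleftrightarrow> a \<le> p \<and> p \<le> b"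
proof -
  define P where "P = {p. p \<le> 2 * m j \<and> (j, p) \<in> S}"
  have P: "finite P" "P \<noteq> {}"
    using p0 unfolding P_def by auto
  define a where "a = Min P"
  define b where "b = Max P"
  have a: "a \<in> P" "\<And>p. p \<in> P \<Longrightarrow> a \<le> p"
    unfolding a_def using Min_in[OF P] Min_le[OF P(1)] by auto
  have b: "b \<in> P" "\<And>p. p \<in> P \<Longrightarrow> p \<le> b"
    unfolding b_def using Max_in[OF P] Max_ge[OF P(1)] by auto
  have "a - 1 \<notin> P" if "a \<noteq> 0"
    using a(2)[of "a - 1"] that by auto
  then have "a = 0 \<or> (j, a - 1) \<notin> S"
    using a(1) unfolding P_def by auto
  then have "even a" "hub j \<in> S"
    using path_left_end[OF j] a(1) unfolding P_def by blast+
  have "Suc b \<notin> P"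
    using b(2)[of "Suc b"] by auto
  then have "b = 2 * m j \<or> (j, Suc b) \<notin> S"
    using b(1) unfolding P_def by auto
  then have "even b"
    using path_right_end[OF j] b(1) unfolding P_def by blast
  have "(j, p) \<in> S \<longleftrightarrow> a \<le> p \<and> p \<le> b" if p: "p \<le> 2 * m j" for p
  proof
    assume "(j, p) \<in> S"
    then show "a \<le> p \<and> p \<le> b"
      using a(2) b(2) p unfolding P_def by blast
  next
    assume "a \<le> p \<and> p \<le> b"
    then show "(j, p) \<in> S"
      using path_interval[OF j \<open>hub j \<in> S\<close>] a(1) b(1) unfolding P_def
      by (cases "p = a \<or> p = b") auto
  qed
  moreover have "a \<le> b" "b \<le> 2 * m j"
    using a(2)[OF b(1)] b(1) unfolding P_def by auto
  ultimately show ?thesis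
    using that \<open>hub j \<in> S\<close> \<open>even a\<close> \<open>even b\<close> by blast
qed

lemma block_minus_cycle_matching:
  assumes j: "j < k"
  shows "\<exists>M. perfect_matching_on (block j - S) M \<and> M \<subseteq> hbw_edges j (m j)"
proof -
  have block: "block j = insert (hub j) {(j, p) | p. p \<le> 2 * m j}"
    using j by (auto simp: block_eq hbw_verts_def hub_def)
  show ?thesis
  proof (cases "\<exists>p0 \<le> 2 * m j. (j, p0) \<in> S")
    case False
    then have "hub j \<notin> S"
      using path_vertex_of_hub[OF j] by blast
    with False have "block j - S = block j"
      unfolding block by blast
    then show ?thesis
      using block_matching[OF j, of 0] by auto
  next
    case True
    then obtain p0 where "(j, p0) \<in> S" "p0 \<le> 2 * m j"
      by blast
    then obtain a b where ab: "hub j \<in> S" "even a" "even b" "a \<le> b" "b \<le> 2 * m j"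
      "\<And>p. p \<le> 2 * m j \<Longrightarrow> (j, p) \<in> S \<longleftrightarrow> a \<le> p \<and> p \<le> b"
      using path_trace_interval[OF j] by blast
    then have "block j - S = block j - ({hub j} \<union> {(j, p) | p. a \<le> p \<and> p \<le> b})"
      unfolding block by auto
    then show ?thesis
      using block_minus_window_matching[OF j ab(2-5)] by simp
  qed
qed

lemma cycle_complement_matching: "\<exists>M. perfect_matching (PV - S) (del_vertices_edges PE S) M"
proof -
  obtain M where "\<And>j. j < k \<Longrightarrow> perfect_matching_on (block j - S) (M j) \<and> M j \<subseteq> hbw_edges j (m j)"
    using block_minus_cycle_matching by metis
  from perfect_matching_of_blocks[OF this] show ?thesis
    using perfect_matching_del_vertices_edges by blast
qed

end

lemma (in prism) cycle_extendable_prism: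
  assumes "odd k"
  shows "cycle_extendable PV PE"
  unfolding cycle_extendable_def
proof (intro conjI allI impI)
  show "matching_covered PV PE"
    by (rule matching_covered_prism)
  fix cs assume "is_cycle PE cs \<and> even (length cs)"
  then interpret prism_cycle k m h ori cs
    using assms by unfold_locales auto
  show "\<exists>M. perfect_matching (PV - set cs) (del_vertices_edges PE (set cs)) M"
    by (rule cycle_complement_matching)
qed

theorem proposition5p5:
  fixes V :: "'a set" and E :: "'a set set"
  assumes "in_G0 V E"
  shows "cycle_extendable V E"
proof -
  obtain k m h ori f where k: "odd k" "k \<ge> 3" and bij: "bij_betw f (prism_verts k m) V"
    and E: "E = (\<lambda>e. f ` e) ` prism_edges k m h ori"
    using assms unfolding in_G0_def by blast
  interpret prism k m h ori
    using k(2) by unfold_locales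
  have "\<forall>e\<in>PE. e \<subseteq> PV"
    using prism_edge_doubleton by blast
  with bij show ?thesis
    unfolding E using cycle_extendable_image cycle_extendable_prism[OF k(1)] by blast
qed

end
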